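(* Let $0<p<1-1/e^2$ be constant and $b=\frac1{1-p}$, so that $\log b<2$. Let $c=\frac12\left(1-\frac{\log b}{2}\right)$ and $\tilde c=\min\left(\frac12\left(\frac1{\log b}-\frac12\right),\frac12\right)$. Let $(n_j)_{j\ge1}$ be a strictly increasing sequence of positive integers and $j_0$ an integer such that $j$ divides $n_j$ for all $j\ge j_0$ and $\gamma(n_j)=j+o(1)$ as $j\to\infty$, where $\gamma(n)=2\log_b n-2\log_b\log_b n-2\log_b 2$. Write $n=n_j$, $k=k_j=n_j/j$, and for $\rho\in[0,1]$ and $2\le i\le j$ let \[T_i=T_i(\rho)=\frac{e^{\rho i}\,b^{\binom i2}\,k^2\,(j!)^2}{n^i\, i!\,((j-i)!)^2}.\] Then, if $j$ is large enough, for all $\rho\in[0,c]$ and all $3\le i\le j$, \[T_i\le n^{-\tilde c}.\]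
   Context: Here $\log$ denotes the natural logarithm. In the paper, $\rho=v/n$ is the proportion of vertices lying in overlap blocks (intersections of size at least $2$ between a part of one $k$-equipartition and a part of another), and the hypothesis $\rho\le c$ is the condition defining the "typical overlap" range. *)

theory Defs
  imports Complex_Main
begin

definition gam :: "real \<Rightarrow> real \<Rightarrow> real" where
  "gam b n = 2 * log b n - 2 * log b (log b n) - 2 * log b 2"

definition T :: "real \<Rightarrow> nat \<Rightarrow> nat \<Rightarrow> real \<Rightarrow> nat \<Rightarrow> real" where
  "T b n j \<rho> i =
     exp (\<rho> * real i) * b ^ (i choose 2) * (real n / real j)^2 * (fact j)^2
     / (real n ^ i * fact i * (fact (j - i))^2)"

end

theory Submission
  imports Defs "HOL-Real_Asymp.Real_Asymp"
begin

(* Write L = ln b, N = ln n and r = i. With x = 2 log_b n one has gam b n = x - 2 log_b x, so the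
   hypothesis on gam gives N = L j / 2 + O(L) + ln x with j - 1 <= x <= 3 j. Taking logarithms,
   ln T_i = rho r + L r (r - 1) / 2 - (r - 2) N - 2 ln j + ln ((j!)^2 / (r! ((j - r)!)^2)),
   and after inserting the estimate for N the first three terms are about
   rho r + L r / 2 - (L / 2) (r - 2) (j - r).
   For r up to K ln j with K = 6 / L + 8 / c, bounding j! / (j - r)! by j^r leaves at most
   r (1 + 2 ln j) - L j / 2, far below -N / 2. For larger r, bound the binomial coefficient by
   j^(j - r) and r! by e r^(r + 1) / e^r: the term -(r - 2) ln x absorbs the growth of r!, the gain
   (L / 2) (r - 2) exceeds 2 ln j on each of the j - r remaining factors, and rho <= c turns the linear
   terms into (rho + L / 2 - 1) r <= -c r. What is left, -c j / 2 - c r / 4 + ln j + 3, lies below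
   -tilde c N since tilde c L <= c and tilde c <= 1 / 2. *)

lemma ln_fact_le:
  assumes "1 \<le> i"
  shows "ln (fact i :: real) \<le> (real i + 1) * ln (real i) - real i + 1"
  using assms
proof (induction i rule: dec_induct)
  case base
  then show ?case by simp
next
  case (step i)
  have i_pos: "0 < real i" using step.hyps by simp
  have "ln (real i / (real i + 1)) \<le> real i / (real i + 1) - 1"
    using i_pos by (intro ln_le_minus_one) simp
  then have "ln (real i) - ln (real i + 1) \<le> - 1 / (real i + 1)"
    using i_pos by (simp add: ln_div field_simps)
  then have "(real i + 1) * (ln (real i) - ln (real i + 1)) \<le> -1"
    using i_pos by (simp add: field_simps)
  moreover have "ln (fact (Suc i) :: real) = ln (real i + 1) + ln (fact i)"
    by (simp add: ln_mult add.commute)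
  ultimately show ?case
    using step.IH by (simp add: algebra_simps)
qed

lemma ln_fact_sub_ln_fact_le:
  assumes "i \<le> j"
  shows "ln (fact j :: real) - ln (fact (j - i)) \<le> real i * ln (real j)"
proof (cases "i = 0")
  case False
  have "fact j = fact (j - i) * (fact j div fact (j - i) :: nat)"
    by (simp add: fact_dvd)
  also have "\<dots> \<le> fact (j - i) * j ^ i"
    using fact_div_fact_le_pow[OF assms] by simp
  finally have "(fact j :: real) \<le> fact (j - i) * real j ^ i"
    by (metis of_nat_fact of_nat_le_iff of_nat_mult of_nat_power)
  then have "ln (fact j :: real) \<le> ln (fact (j - i) * real j ^ i)"
    by (rule ln_mono) simp
  then show ?thesis
    using assms False by (simp add: ln_mult ln_realpow)
qed simp

lemma ln_fact_le_ln_fact_add: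
  assumes "i \<le> j"
  shows "ln (fact j :: real) \<le> ln (fact i) + ln (fact (j - i)) + real (j - i) * ln (real j)"
proof (cases "i = j")
  case False
  have "j choose i \<le> j ^ (j - i)"
    using binomial_symmetric[OF assms] binomial_le_pow[of "j - i" j] by simp
  then have "real (j choose i) \<le> real j ^ (j - i)"
    by (metis of_nat_le_iff of_nat_power)
  moreover have "(fact j :: real) = fact i * fact (j - i) * real (j choose i)"
    using binomial_fact_lemma[OF assms] by (metis of_nat_fact of_nat_mult)
  ultimately have "ln (fact j :: real) \<le> ln (fact i * fact (j - i) * real j ^ (j - i))"
    using assms by (intro ln_mono) simp_all
  then show ?thesis
    using assms False by (simp add: ln_mult ln_realpow)
qed simp

lemma ln_pow_ratio_le:
  fixes r J :: real
  assumes "1 \<le> r" "r \<le> J" "2 \<le> J"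
  shows "(r + 1) * ln r - (r - 2) * ln (J - 1) \<le> 3 * ln J + 2"
proof -
  have "ln (J / (J - 1)) \<le> J / (J - 1) - 1"
    using assms by (intro ln_le_minus_one) simp
  then have "ln J - ln (J - 1) \<le> 1 / (J - 1)"
    using assms by (simp add: ln_div field_simps)
  moreover have "ln r \<le> ln J" "ln (J - 1) \<le> ln J"
    using assms by simp_all
  ultimately have "ln r - ln (J - 1) \<le> 1 / (J - 1)"
    by linarith
  then have "r * (ln r - ln (J - 1)) \<le> r * (1 / (J - 1))"
    using assms by (intro mult_left_mono) simp_all
  also have "\<dots> \<le> 2"
    using assms by (simp add: field_simps)
  finally show ?thesis
    using \<open>ln r \<le> ln J\<close> \<open>ln (J - 1) \<le> ln J\<close> by (simp add: algebra_simps)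
qed

lemma real_choose_two: "real (i choose 2) = real i * (real i - 1) / 2"
  by (induction i) (auto simp: numeral_2_eq_2 field_simps)

lemma ln_T:
  assumes "0 < b" "0 < n" "0 < j" "i \<le> j"
  shows "ln (T b n j \<rho> i) = \<rho> * real i + ln b * (real i * (real i - 1) / 2)
           - (real i - 2) * ln (real n) - 2 * ln (real j)
           + 2 * ln (fact j) - ln (fact i) - 2 * ln (fact (j - i))"
  using assms unfolding T_def
  by (simp add: ln_div ln_mult ln_realpow real_choose_two algebra_simps)

lemma gam_eq:
  assumes "1 < b" "1 < n"
  shows "gam b n = 2 * log b n - 2 * log b (2 * log b n)"
proof -
  have "0 < log b n" using assms by simp
  then show ?thesis
    using assms unfolding gam_def by (simp add: log_mult_pos)
qed

lemma ln_bounds_of_gam: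
  fixes b n j \<delta> :: real
  assumes b: "1 < b" and j: "2 \<le> j" and \<delta>: "\<delta> \<le> 1"
    and n: "0 < n" "1 \<le> 2 * log b n"
    and gam: "\<bar>gam b n - j\<bar> \<le> \<delta>"
    and log_small: "\<forall>y \<ge> 3 * j. 4 * log b y \<le> y"
  shows "ln b * (j - \<delta>) / 2 + ln (j - 1) \<le> ln n"
    and "ln n \<le> ln b * (j + \<delta>) / 2 + ln (3 * j)"
proof -
  define x where "x = 2 * log b n"
  have "1 < n"
    using n b zero_less_log_cancel_iff[of b n] by linarith
  then have x_gam: "x - 2 * log b x = gam b n"
    using gam_eq b by (simp add: x_def)
  have "1 \<le> x"
    using n by (simp add: x_def)
  then have log_x: "0 \<le> log b x"
    using b by (subst zero_le_log_cancel_iff) auto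
  have "j - 1 \<le> x"
    using x_gam log_x gam \<delta> by linarith
  have "x \<le> 3 * j"
  proof (rule ccontr)
    assume "\<not> x \<le> 3 * j"
    then have "4 * log b x \<le> x"
      using log_small by simp
    then show False
      using \<open>\<not> x \<le> 3 * j\<close> x_gam gam \<delta> j by linarith
  qed
  have ln_n: "ln n = ln b * gam b n / 2 + ln x"
    using b n x_gam by (simp add: x_def log_def field_simps)
  have "ln (j - 1) \<le> ln x" "ln x \<le> ln (3 * j)"
    using \<open>j - 1 \<le> x\<close> \<open>x \<le> 3 * j\<close> j by simp_all
  moreover have "ln b * (j - \<delta>) \<le> ln b * gam b n" "ln b * gam b n \<le> ln b * (j + \<delta>)"
    using gam b by (simp_all add: abs_le_iff)
  ultimately show "ln b * (j - \<delta>) / 2 + ln (j - 1) \<le> ln n"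
    and "ln n \<le> ln b * (j + \<delta>) / 2 + ln (3 * j)"
    unfolding ln_n by linarith+
qed

locale T_estimate =
  fixes b \<delta> :: real and n j :: nat
  assumes one_less_b: "1 < b" and ln_b_less_2: "ln b < 2"
    and delta_nonneg: "0 \<le> \<delta>" and delta_le_1: "\<delta> \<le> 1"
    and ln_b_mult_delta: "ln b * \<delta> \<le> (1 - ln b / 2) / 4"
    and two_le_j: "2 \<le> j"
    and ln_n_lower: "ln b * (real j - \<delta>) / 2 + ln (real j - 1) \<le> ln (real n)"
    and ln_n_upper: "ln (real n) \<le> ln b * (real j + \<delta>) / 2 + ln (3 * real j)"
begin

abbreviation L :: real where "L \<equiv> ln b"
definition c :: real where "c = (1 - L / 2) / 2"
abbreviation N :: real where "N \<equiv> ln (real n)"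
abbreviation J :: real where "J \<equiv> real j"

lemma L_pos: "0 < L"
  using one_less_b by simp

lemma c_pos: "0 < c" and c_le_half: "c \<le> 1 / 2"
  using ln_b_less_2 L_pos by (simp_all add: c_def)

lemma L_mult_delta: "0 \<le> L * \<delta>" "L * \<delta> \<le> c / 2" "L * \<delta> \<le> 1 / 4"
  using ln_b_mult_delta L_pos delta_nonneg c_le_half by (simp_all add: c_def)

lemma N_pos: "0 < N"
proof -
  have "0 < L * (J - \<delta>)"
    using L_pos two_le_j delta_le_1 by simp
  moreover have "0 \<le> ln (J - 1)"
    using two_le_j by simp
  ultimately show ?thesis
    using ln_n_lower by linarith
qed

lemma n_pos: "0 < n"
  using N_pos by (cases n) simp_all

lemma exponent_le_small_i:
  fixes r \<rho> :: real
  assumes \<rho>: "0 \<le> \<rho>" "\<rho> \<le> 1 / 2" and r: "3 \<le> r" "r \<le> J - 2"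
  shows "\<rho> * r + L * (r * (r - 1) / 2) - (r - 2) * N + 2 * (r * ln J)
    \<le> r * (1 + 2 * ln J) + 3 * L - L * J / 2"
proof -
  have "0 \<le> ln (J - 1)"
    using two_le_j by simp
  then have "L * (J - \<delta>) / 2 \<le> N"
    using ln_n_lower by linarith
  then have "(r - 2) * (L * (J - \<delta>) / 2) \<le> (r - 2) * N"
    using r by (intro mult_left_mono) simp_all
  moreover have "L * (r * (r - 1) / 2) - (r - 2) * (L * (J - \<delta>) / 2)
      = 3 * L - L * J / 2 - L * ((r - 3) * (J - 2 - r)) / 2 + (r - 2) * (L * \<delta>) / 2"
    by (simp add: field_simps)
  moreover have "0 \<le> L * ((r - 3) * (J - 2 - r))"
    using L_pos r by simp
  moreover have "(r - 2) * (L * \<delta>) \<le> r * (1 / 4)"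
    using L_mult_delta r by (intro mult_mono) simp_all
  moreover have "\<rho> * r \<le> 1 / 2 * r"
    using \<rho> r by (intro mult_right_mono) simp_all
  moreover have "r * (1 + 2 * ln J) = r + 2 * (r * ln J)"
    by (simp add: algebra_simps)
  ultimately show ?thesis
    using r by linarith
qed

lemma ln_T_le_small_i:
  assumes \<rho>: "0 \<le> \<rho>" "\<rho> \<le> 1 / 2" and i: "3 \<le> i"
    and small: "real i * (1 + 2 * ln J) + 7 + ln (3 * J) / 2 \<le> L * J / 4"
  shows "ln (T b n j \<rho> i) \<le> - N / 2"
proof -
  define r where "r = real i"
  have ln_J: "0 \<le> ln J" "0 \<le> ln (3 * J)"
    using two_le_j by simp_all
  have "r \<le> r * (1 + 2 * ln J)"
    using mult_left_mono[of 1 "1 + 2 * ln J" r] ln_J by (simp add: r_def)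
  moreover have "L * J \<le> 2 * J"
    using ln_b_less_2 by (intro mult_right_mono) simp_all
  ultimately have r_le: "r \<le> J - 2"
    using small ln_J by (simp add: r_def)
  then have "i \<le> j"
    by (simp add: r_def)
  have "0 \<le> ln (fact i :: real)"
    by simp
  have "ln (T b n j \<rho> i) \<le> \<rho> * r + L * (r * (r - 1) / 2) - (r - 2) * N + 2 * (r * ln J)"
    using ln_T[OF _ n_pos _ \<open>i \<le> j\<close>, of b \<rho>] ln_fact_sub_ln_fact_le[OF \<open>i \<le> j\<close>]
      \<open>0 \<le> ln (fact i)\<close> one_less_b two_le_j ln_J
    unfolding r_def by linarith
  also have "\<dots> \<le> r * (1 + 2 * ln J) + 3 * L - L * J / 2"
    using exponent_le_small_i \<rho> i r_le by (simp add: r_def)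
  also have "\<dots> \<le> - N / 2"
    using small ln_n_upper L_mult_delta ln_b_less_2 distrib_left[of L J \<delta>]
    unfolding r_def by linarith
  finally show ?thesis .
qed

lemma le_mult_of_threshold_le:
  assumes "0 \<le> l" and "(6 / L + 8 / c) * l \<le> r"
  shows "6 * l \<le> L * r" and "8 * l \<le> c * r"
proof -
  have "6 * l \<le> L * ((6 / L + 8 / c) * l)" "8 * l \<le> c * ((6 / L + 8 / c) * l)"
    using L_pos c_pos assms(1) by (simp_all add: field_simps)
  moreover have "L * ((6 / L + 8 / c) * l) \<le> L * r" "c * ((6 / L + 8 / c) * l) \<le> c * r"
    using L_pos c_pos assms(2) by (simp_all add: mult_left_mono)
  ultimately show "6 * l \<le> L * r" and "8 * l \<le> c * r"
    by linarith+
qed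

lemma exponent_le_large_i:
  fixes r \<rho> :: real
  assumes \<rho>: "0 \<le> \<rho>" "\<rho> \<le> c" and r: "2 \<le> r" "r \<le> J"
    and J_large: "10 \<le> ln J" and L_r: "6 * ln J \<le> L * r"
  shows "\<rho> * r + L * (r * (r - 1) / 2) - (r - 2) * N - 2 * ln J
      + (2 * ((J - r) * ln J) + (r + 1) * ln r - r + 1) \<le> - (c * J) / 2 - c * r / 4 + ln J + 3"
proof -
  have "(r - 2) * (L * (J - \<delta>) / 2) + (r - 2) * ln (J - 1) \<le> (r - 2) * N"
    using mult_left_mono[OF ln_n_lower, of "r - 2"] r by (simp add: distrib_left)
  moreover have "L * (r * (r - 1) / 2) - (r - 2) * (L * (J - \<delta>) / 2)
      = L * r / 2 - (J - r) * ((r - 2) * L / 2) + (r - 2) * (L * \<delta>) / 2"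
    by (simp add: field_simps)
  moreover have "(r + 1) * ln r - (r - 2) * ln (J - 1) \<le> 3 * ln J + 2"
    using ln_pow_ratio_le r two_le_j by simp
  moreover have "2 * ln J + c / 2 \<le> (r - 2) * L / 2"
  proof -
    have "(r - 2) * L / 2 = L * r / 2 - L"
      by (simp add: field_simps)
    then show ?thesis
      using L_r J_large ln_b_less_2 c_le_half by linarith
  qed
  then have "(J - r) * (2 * ln J + c / 2) \<le> (J - r) * ((r - 2) * L / 2)"
    using r by (intro mult_left_mono) simp_all
  moreover have "(J - r) * (2 * ln J + c / 2) = 2 * ((J - r) * ln J) + c * J / 2 - c * r / 2"
    by (simp add: field_simps)
  moreover have "(r - 2) * (L * \<delta>) \<le> r * (c / 2)"
    using L_mult_delta c_pos r by (intro mult_mono) simp_all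
  moreover have "r * (c / 2) = c * r / 2"
    by simp
  moreover have "\<rho> * r \<le> c * r"
    using \<rho> r by (intro mult_right_mono) simp_all
  moreover have "L * r / 2 - r = - 2 * (c * r)"
    by (simp add: c_def field_simps)
  ultimately show ?thesis
    by linarith
qed

lemma ct_mult_N_le:
  assumes ct: "0 \<le> ct" "ct * L \<le> c" "ct \<le> 1 / 2"
  shows "ct * N \<le> c * J / 2 + ln (3 * J) / 2 + 1 / 16"
proof -
  have "ct * N \<le> ct * (L * (J + \<delta>) / 2 + ln (3 * J))"
    using ln_n_upper ct by (intro mult_left_mono) simp_all
  moreover have "ct * (L * (J + \<delta>) / 2 + ln (3 * J))
      = (ct * L) * J / 2 + ct * (L * \<delta>) / 2 + ct * ln (3 * J)"
    by (simp add: algebra_simps)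
  moreover have "(ct * L) * J \<le> c * J"
    using ct by (intro mult_right_mono) simp_all
  moreover have "ct * (L * \<delta>) \<le> 1 / 2 * (1 / 4)"
    using ct L_mult_delta by (intro mult_mono) simp_all
  moreover have "ct * ln (3 * J) \<le> 1 / 2 * ln (3 * J)"
    using ct two_le_j by (intro mult_right_mono) simp_all
  ultimately show ?thesis
    by linarith
qed

lemma ln_T_le_large_i:
  assumes \<rho>: "0 \<le> \<rho>" "\<rho> \<le> c" and i: "i \<le> j"
    and J_large: "10 \<le> ln J" and large: "(6 / L + 8 / c) * ln J \<le> real i"
    and ct: "0 \<le> ct" "ct * L \<le> c" "ct \<le> 1 / 2"
  shows "ln (T b n j \<rho> i) \<le> - ct * N"
proof -
  define r where "r = real i"
  have L_r: "6 * ln J \<le> L * r" and c_r: "8 * ln J \<le> c * r"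
    using le_mult_of_threshold_le[OF _ large] J_large by (simp_all add: r_def)
  have "L * r \<le> 2 * r"
    using ln_b_less_2 by (intro mult_right_mono) (simp_all add: r_def)
  then have "2 \<le> r"
    using L_r J_large by simp
  have "1 \<le> i" "r \<le> J"
    using \<open>2 \<le> r\<close> i by (simp_all add: r_def)
  have "ln (T b n j \<rho> i) \<le> \<rho> * r + L * (r * (r - 1) / 2) - (r - 2) * N - 2 * ln J
      + (2 * ((J - r) * ln J) + (r + 1) * ln r - r + 1)"
    using ln_T[OF _ n_pos _ i, of b \<rho>] ln_fact_le_ln_fact_add[OF i] ln_fact_le[OF \<open>1 \<le> i\<close>]
      one_less_b two_le_j i
    by (simp add: r_def of_nat_diff)
  also have "\<dots> \<le> - (c * J) / 2 - c * r / 4 + ln J + 3"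
    using exponent_le_large_i \<rho> \<open>2 \<le> r\<close> \<open>r \<le> J\<close> J_large L_r by simp
  also have "\<dots> \<le> - ct * N"
  proof -
    have "ln (3 * J) = ln 3 + ln J" "ln (3 :: real) \<le> 2"
      using two_le_j ln_le_minus_one[of 3] by (simp_all add: ln_mult)
    then show ?thesis
      using ct_mult_N_le[OF ct] c_r J_large by linarith
  qed
  finally show ?thesis .
qed

lemma T_le_n_powr:
  assumes J_large: "10 \<le> ln J"
    and threshold: "(6 / L + 8 / c) * ln J * (1 + 2 * ln J) + 7 + ln (3 * J) / 2 \<le> L * J / 4"
    and \<rho>: "0 \<le> \<rho>" "\<rho> \<le> c" and i: "3 \<le> i" "i \<le> j"
  shows "T b n j \<rho> i \<le> real n powr - min ((1 / L - 1 / 2) / 2) (1 / 2)"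
proof -
  define ct where "ct = min ((1 / L - 1 / 2) / 2) (1 / 2)"
  have "ct = min (c / L) (1 / 2)"
    using L_pos by (simp add: ct_def c_def field_simps)
  then have "0 \<le> ct" "ct \<le> c / L" "ct \<le> 1 / 2"
    using L_pos c_pos by (simp_all add: min_def)
  then have ct: "0 \<le> ct" "ct * L \<le> c" "ct \<le> 1 / 2"
    using L_pos by (simp_all add: pos_le_divide_eq)
  have "ln (T b n j \<rho> i) \<le> - ct * N"
  proof (cases "real i \<le> (6 / L + 8 / c) * ln J")
    case True
    then have "real i * (1 + 2 * ln J) \<le> (6 / L + 8 / c) * ln J * (1 + 2 * ln J)"
      using J_large by (intro mult_right_mono) simp_all
    then have "ln (T b n j \<rho> i) \<le> - N / 2"
      using ln_T_le_small_i \<rho> i c_le_half threshold by simp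
    moreover have "ct * N \<le> 1 / 2 * N"
      using ct N_pos by (intro mult_right_mono) simp_all
    ultimately show ?thesis
      by simp
  next
    case False
    then show ?thesis
      using ln_T_le_large_i \<rho> i J_large ct by simp
  qed
  moreover have "0 < T b n j \<rho> i"
    using one_less_b n_pos two_le_j unfolding T_def by simp
  ultimately have "T b n j \<rho> i \<le> exp (- ct * N)"
    by (metis exp_le_cancel_iff exp_ln)
  then show ?thesis
    using n_pos by (simp add: powr_def ct_def)
qed

end

lemma T_estimate_of_gam:
  fixes b \<delta> :: real and n j :: nat
  assumes b: "1 < b" "ln b < 2"
    and \<delta>: "0 \<le> \<delta>" "\<delta> \<le> 1" "ln b * \<delta> \<le> (1 - ln b / 2) / 4"
    and j: "10 \<le> ln (real j)" "j \<le> n"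
    and gam: "\<bar>gam b (real n) - real j\<bar> \<le> \<delta>"
    and log_small: "\<forall>y \<ge> 3 * real j. 4 * log b y \<le> y"
  shows "T_estimate b \<delta> n j"
proof -
  have "0 < j"
    using j(1) by (cases j) simp_all
  then have "exp 10 \<le> real j"
    using j(1) by (metis exp_le_cancel_iff exp_ln of_nat_0_less_iff)
  moreover have "11 \<le> exp (10 :: real)"
    using exp_ge_add_one_self[of 10] by simp
  ultimately have "2 \<le> j"
    by linarith
  have "10 \<le> ln (real n)" "0 < n"
    using j \<open>0 < j\<close> by (simp_all add: order.trans[OF _ ln_mono])
  then have "1 \<le> 2 * log b (real n)"
    using b by (simp add: log_def field_simps)
  then show ?thesis
    using ln_bounds_of_gam[OF b(1) _ \<delta>(2) _ _ gam log_small] b \<delta> \<open>2 \<le> j\<close> \<open>0 < n\<close>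
    by unfold_locales simp_all
qed

lemma inverse_one_minus_bounds:
  fixes p :: real
  assumes "0 < p" "p < 1 - 1 / exp 2"
  shows "1 < 1 / (1 - p)" and "ln (1 / (1 - p)) < 2"
proof -
  have "0 < 1 / exp (2 :: real)"
    by simp
  then have "0 < 1 - p" "1 < exp 2 * (1 - p)"
    using assms(2) by (linarith, simp add: field_simps)
  then have "1 < 1 / (1 - p)" "1 / (1 - p) < exp 2"
    using assms(1) by (simp_all add: field_simps)
  moreover have "ln (1 / (1 - p)) < ln (exp 2)"
    using \<open>0 < 1 - p\<close> \<open>1 / (1 - p) < exp 2\<close> by (subst ln_less_cancel_iff) auto
  ultimately show "1 < 1 / (1 - p)" and "ln (1 / (1 - p)) < 2"
    by simp_all
qed

theorem lemma6:
  fixes p :: real and nn :: "nat \<Rightarrow> nat" and j0 :: nat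
  assumes p_pos: "0 < p" and p_lt: "p < 1 - 1 / exp 2"
    and mono: "strict_mono nn"
    and pos: "\<forall>j\<ge>1. 0 < nn j"
    and dvd: "\<forall>j. 1 \<le> j \<and> j0 \<le> j \<longrightarrow> j dvd nn j"
    and gam_lim: "(\<lambda>j. gam (1 / (1 - p)) (real (nn j)) - real j) \<longlonglongrightarrow> 0"
  shows "let b = 1 / (1 - p);
             c = (1 - ln b / 2) / 2;
             ct = min ((1 / ln b - 1 / 2) / 2) (1 / 2)
         in \<forall>\<^sub>F j in sequentially.
              \<forall>\<rho>\<in>{0..c}. \<forall>i. 3 \<le> i \<and> i \<le> j \<longrightarrow>
                T b (nn j) j \<rho> i \<le> real (nn j) powr (- ct)"
proof -
  define b where "b = 1 / (1 - p)"
  define c where "c = (1 - ln b / 2) / 2"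
  define \<delta> where "\<delta> = min 1 (c / (2 * ln b))"
  have b: "1 < b" "ln b < 2"
    using inverse_one_minus_bounds[OF p_pos p_lt] by (simp_all add: b_def)
  then have "0 < c" and \<delta>: "0 < \<delta>" "\<delta> \<le> 1" "ln b * \<delta> \<le> (1 - ln b / 2) / 4"
    by (auto simp: c_def \<delta>_def min_def field_simps)
  have "\<forall>\<^sub>F y in at_top. 4 * log b y \<le> y"
    using b by real_asymp
  then obtain Y where Y: "\<forall>y \<ge> Y. 4 * log b y \<le> y"
    unfolding eventually_at_top_linorder by blast
  have "\<forall>\<^sub>F j in sequentially. \<bar>gam b (real (nn j)) - real j\<bar> \<le> \<delta>"
    using tendstoD[OF gam_lim[folded b_def] \<delta>(1)] by eventually_elim (simp add: dist_real_def)
  moreover have "\<forall>\<^sub>F j in sequentially. 10 \<le> ln (real j) \<and> Y \<le> 3 * real j \<and>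
      (6 / ln b + 8 / c) * ln (real j) * (1 + 2 * ln (real j)) + 7 + ln (3 * real j) / 2
        \<le> ln b * real j / 4"
    using b \<open>0 < c\<close> by (intro eventually_conj) real_asymp+
  ultimately have "\<forall>\<^sub>F j in sequentially. T_estimate b \<delta> (nn j) j \<and> 10 \<le> ln (real j) \<and>
      (6 / ln b + 8 / c) * ln (real j) * (1 + 2 * ln (real j)) + 7 + ln (3 * real j) / 2
        \<le> ln b * real j / 4"
    by eventually_elim (use b \<delta> Y seq_suble[OF mono] in \<open>auto intro!: T_estimate_of_gam\<close>)
  then show ?thesis
    unfolding Let_def b_def[symmetric] c_def[symmetric]
    by eventually_elim (use T_estimate.T_le_n_powr T_estimate.c_def c_def in fastforce)
qed

end
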